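(* Let $k$ be a positive integer. If $G$ is a simple graph with $\operatorname{ex}(G,P_3)<k$, then $e(G)\leq\binom{k}{2}+\mathbf{1}_{k=3}$. Consequently $\mathcal{E}_{P_3}(k)=\binom{k}{2}+\mathbf{1}_{k=3}$.
   Context: $P_3$ denotes the path with 3 edges (4 vertices). Graphs are simple, 2-uniform, without isolated vertices. $\operatorname{ex}(G,H)$ is the maximum number of edges in a subgraph of $G$ containing no copy of $H$, and $\mathcal{E}_H(k):=\sup\{e(G): G\text{ simple}, \operatorname{ex}(G,H)<k\}$. $\mathbf{1}_{k=3}$ equals $1$ if $k=3$ and $0$ otherwise. *)

theory Defs
  imports Main "HOL-Library.Extended_Nat"
begin

text \<open>A simple graph without isolated vertices is represented by its finite set of
edges, each edge being a 2-element set of vertices. The vertex set is the union of the edges.\<close>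

definition simple_graph :: "'a set set \<Rightarrow> bool" where
  "simple_graph G \<longleftrightarrow> finite G \<and> (\<forall>e\<in>G. card e = 2)"

definition num_edges :: "'a set set \<Rightarrow> nat" where
  "num_edges G = card G"

definition contains_copy :: "'a set set \<Rightarrow> 'b set set \<Rightarrow> bool" where
  "contains_copy F H \<longleftrightarrow> (\<exists>f. inj_on f (\<Union>H) \<and> (\<forall>e\<in>H. f ` e \<in> F))"

definition ex :: "'a set set \<Rightarrow> 'b set set \<Rightarrow> nat" where
  "ex G H = Max {card F | F. F \<subseteq> G \<and> \<not> contains_copy F H}"

definition P3 :: "nat set set" where
  "P3 = {{0,1},{1,2},{2,3}}"

text \<open>E_H(k) = sup of e(G) over simple graphs G with ex(G,H) < k (vertices taken from nat,
which suffices since graphs are finite).\<close>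
definition E_H :: "'b set set \<Rightarrow> nat \<Rightarrow> enat" where
  "E_H H k = Sup {enat (num_edges G) | G :: nat set set. simple_graph G \<and> ex G H < k}"

end

theory Submission
  imports Defs
begin

text \<open>Let \<open>f(s) = C(s+1, 2) + [s = 2]\<close>. We prove \<open>e(G) \<le> f(ex(G, P\<^sub>3))\<close> by induction on
  \<open>e(G)\<close>; as \<open>f\<close> is monotone this is the upper bound, and the complete graph on \<open>k - 1\<close>
  vertices with a pendant edge at every vertex (the 4-cycle when \<open>k = 3\<close>) attains it.
  Lower bounds on \<open>s = ex(G, P\<^sub>3)\<close> come from vertex-disjoint stars and triangles in \<open>G\<close>, which
  are \<open>P\<^sub>3\<close>-free. Let \<open>c\<close> be a vertex of maximum degree \<open>d\<close> and \<open>X\<close> its closed neighbourhood.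
  Deleting the set \<open>T\<close> of edges meeting \<open>X\<close> lowers \<open>ex\<close> by at least \<open>d\<close>, because the star at
  \<open>c\<close> can be put back. Double counting gives \<open>2|T| = d + \<Sum>\<^sub>a (deg a + |N(a) - X|)\<close> over the
  neighbours \<open>a\<close> of \<open>c\<close>, and each term is bounded by exhibiting two disjoint stars, or a star
  and a triangle; the extremal case \<open>s = d\<close> needs a charging argument. Altogether
  \<open>|T| \<le> f(s) - f(s - d)\<close>.\<close>

definition P3_free :: "'a set set \<Rightarrow> bool" where
  "P3_free F \<longleftrightarrow> \<not> (\<exists>a b c d. distinct [a, b, c, d] \<and> {a, b} \<in> F \<and> {b, c} \<in> F \<and> {c, d} \<in> F)"

lemma P3_freeD:
  "P3_free F \<Longrightarrow> {a, b} \<in> F \<Longrightarrow> {b, c} \<in> F \<Longrightarrow> {c, d} \<in> F \<Longrightarrow> distinct [a, b, c, d] \<Longrightarrow> False"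
  unfolding P3_free_def by blast

lemma P3_free_subset: "P3_free F \<Longrightarrow> F' \<subseteq> F \<Longrightarrow> P3_free F'"
  unfolding P3_free_def by blast

lemma contains_copy_P3_iff: "contains_copy F P3 \<longleftrightarrow> \<not> P3_free F"
proof
  have vertices: "\<Union>P3 = {0, 1, 2, 3}" unfolding P3_def by auto
  assume "contains_copy F P3"
  then obtain f where inj: "inj_on f (\<Union>P3)" and edges: "\<forall>e\<in>P3. f ` e \<in> F"
    unfolding contains_copy_def by blast
  have "{f 0, f 1} \<in> F" "{f 1, f 2} \<in> F" "{f 2, f 3} \<in> F"
    using edges unfolding P3_def by auto
  moreover have "distinct [f 0, f 1, f 2, f 3]"
    using inj unfolding vertices inj_on_def by auto
  ultimately show "\<not> P3_free F" unfolding P3_free_def by blast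
next
  have vertices: "\<Union>P3 = {0, 1, 2, 3}" unfolding P3_def by auto
  assume "\<not> P3_free F"
  then obtain a b c d where path: "distinct [a, b, c, d]" "{a, b} \<in> F" "{b, c} \<in> F" "{c, d} \<in> F"
    unfolding P3_free_def by blast
  define f where "f i = (if i = 0 then a else if i = 1 then b else if i = 2 then c else d)" for i :: nat
  have "inj_on f (\<Union>P3)" unfolding vertices inj_on_def f_def using path(1) by auto
  moreover have "\<forall>e\<in>P3. f ` e \<in> F" unfolding P3_def f_def using path by (auto simp: insert_commute)
  ultimately show "contains_copy F P3" unfolding contains_copy_def by blast
qed

definition star_edges :: "'a \<Rightarrow> 'a set \<Rightarrow> 'a set set" where
  "star_edges x L = (\<lambda>l. {x, l}) ` L"

definition triangle_edges :: "'a \<Rightarrow> 'a \<Rightarrow> 'a \<Rightarrow> 'a set set" where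
  "triangle_edges x y z = {{x, y}, {y, z}, {x, z}}"

lemma P3_free_star_edges: "P3_free (star_edges x L)"
proof -
  have False if "{a, b} \<in> star_edges x L" "{c, d} \<in> star_edges x L" "distinct [a, b, c, d]"
    for a b c d
  proof -
    have "x \<in> {a, b}" "x \<in> {c, d}" using that(1,2) unfolding star_edges_def by auto
    thus False using that(3) by auto
  qed
  thus ?thesis unfolding P3_free_def by blast
qed

lemma P3_free_triangle: "P3_free (triangle_edges x y z)"
proof -
  have False if "{a, b} \<in> triangle_edges x y z" "{b, c} \<in> triangle_edges x y z" "{c, d} \<in> triangle_edges x y z"
      "distinct [a, b, c, d]" for a b c d
  proof -
    have "{a, b, c, d} \<subseteq> {x, y, z}" using that(1-3) unfolding triangle_edges_def by blast
    hence "card {a, b, c, d} \<le> card {x, y, z}" by (simp add: card_mono)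
    also have "\<dots> \<le> 3" by (simp add: card_insert_le_m1)
    finally show False using that(4) by simp
  qed
  thus ?thesis unfolding P3_free_def by blast
qed

text \<open>Every path in the union of two vertex-disjoint graphs stays inside one of them.\<close>
lemma P3_free_Un_disjoint:
  assumes "P3_free F1" "P3_free F2" "\<Union>F1 \<inter> \<Union>F2 = {}"
  shows "P3_free (F1 \<union> F2)"
proof -
  have False if path: "{a, b} \<in> F1 \<union> F2" "{b, c} \<in> F1 \<union> F2" "{c, d} \<in> F1 \<union> F2"
      "distinct [a, b, c, d]" for a b c d
  proof -
    have "({a, b} \<in> F1 \<and> {b, c} \<in> F1 \<and> {c, d} \<in> F1) \<or> ({a, b} \<in> F2 \<and> {b, c} \<in> F2 \<and> {c, d} \<in> F2)"
      using path(1-3) assms(3) by blast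
    thus False using assms(1,2) path(4) unfolding P3_free_def by blast
  qed
  thus ?thesis unfolding P3_free_def by blast
qed

lemma card_star_edges: "finite L \<Longrightarrow> x \<notin> L \<Longrightarrow> card (star_edges x L) = card L"
  unfolding star_edges_def by (rule card_image) (auto simp: inj_on_def doubleton_eq_iff)

lemma Union_star_edges_subset: "\<Union>(star_edges x L) \<subseteq> insert x L"
  unfolding star_edges_def by auto

lemma card_triangle: "x \<noteq> y \<Longrightarrow> y \<noteq> z \<Longrightarrow> x \<noteq> z \<Longrightarrow> card (triangle_edges x y z) = 3"
  unfolding triangle_edges_def by (simp add: doubleton_eq_iff)

lemma Union_triangle: "\<Union>(triangle_edges x y z) = {x, y, z}"
  unfolding triangle_edges_def by auto

definition nbhd :: "'a set set \<Rightarrow> 'a \<Rightarrow> 'a set" where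
  "nbhd G v = {u. {v, u} \<in> G}"

lemma nbhd_sym: "u \<in> nbhd G v \<longleftrightarrow> v \<in> nbhd G u"
  unfolding nbhd_def by (simp add: insert_commute)

lemma simple_graph_edgeE:
  assumes "simple_graph G" "e \<in> G"
  obtains a b where "a \<noteq> b" "e = {a, b}"
  using assms unfolding simple_graph_def by (meson card_2_iff)

lemma simple_graph_edge_at:
  assumes "simple_graph G" "e \<in> G" "a \<in> e"
  obtains u where "u \<noteq> a" "e = {a, u}"
proof -
  obtain p q where "p \<noteq> q" "e = {p, q}" using simple_graph_edgeE[OF assms(1,2)] .
  thus ?thesis using that[of "if a = p then q else p"] assms(3) by (auto simp: insert_commute)
qed

lemma simple_graph_edge_nonempty: "simple_graph G \<Longrightarrow> e \<in> G \<Longrightarrow> e \<noteq> {}"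
  unfolding simple_graph_def by force

lemma not_in_nbhd: "simple_graph G \<Longrightarrow> v \<notin> nbhd G v"
  unfolding nbhd_def simple_graph_def by force

lemma finite_vertices: "simple_graph G \<Longrightarrow> finite (\<Union>G)"
  unfolding simple_graph_def by (auto intro!: finite_Union intro: card_ge_0_finite)

lemma finite_nbhd: "simple_graph G \<Longrightarrow> finite (nbhd G v)"
  by (rule finite_subset[OF _ finite_vertices]) (auto simp: nbhd_def)

lemma simple_graph_subset: "simple_graph G \<Longrightarrow> G' \<subseteq> G \<Longrightarrow> simple_graph G'"
  unfolding simple_graph_def by (auto intro: finite_subset)

lemma card_incident_edges:
  assumes "simple_graph G"
  shows "card {e\<in>G. v \<in> e \<and> P e} = card {u\<in>nbhd G v. P {v, u}}"
proof -
  have "{e\<in>G. v \<in> e \<and> P e} = (\<lambda>u. {v, u}) ` {u\<in>nbhd G v. P {v, u}}"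
  proof (intro equalityI subsetI)
    fix e assume "e \<in> {e\<in>G. v \<in> e \<and> P e}"
    moreover obtain u where "e = {v, u}"
      using simple_graph_edge_at[OF assms] calculation by blast
    ultimately show "e \<in> (\<lambda>u. {v, u}) ` {u\<in>nbhd G v. P {v, u}}" unfolding nbhd_def by auto
  qed (auto simp: nbhd_def)
  moreover have "inj_on (\<lambda>u. {v, u}) {u\<in>nbhd G v. P {v, u}}"
    by (auto simp: inj_on_def doubleton_eq_iff)
  ultimately show ?thesis by (simp add: card_image)
qed

lemma sum_card_filter_swap:
  assumes "finite B" "finite C"
  shows "(\<Sum>y\<in>B. card {x\<in>C. R x y}) = (\<Sum>x\<in>C. card {y\<in>B. R x y})"
proof -
  have "(\<Sum>y\<in>B. card {x\<in>C. R x y}) = (\<Sum>y\<in>B. \<Sum>x\<in>C. if R x y then 1 else 0)"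
    by (rule sum.cong[OF refl]) (use sum.inter_filter[of C "\<lambda>_. 1::nat"] assms card_eq_sum in simp)
  also have "\<dots> = (\<Sum>x\<in>C. \<Sum>y\<in>B. if R x y then 1 else 0)" by (rule sum.swap)
  also have "\<dots> = (\<Sum>x\<in>C. card {y\<in>B. R x y})"
    by (rule sum.cong[OF refl]) (use sum.inter_filter[of B "\<lambda>_. 1::nat"] assms card_eq_sum in simp)
  finally show ?thesis .
qed

lemma sum_card_incident:
  assumes "finite G" "finite S"
  shows "(\<Sum>v\<in>S. card {e\<in>G. v \<in> e \<and> P e}) = (\<Sum>e\<in>{e\<in>G. P e}. card (e \<inter> S))"
proof -
  have "(\<Sum>v\<in>S. card {e\<in>G. v \<in> e \<and> P e}) = (\<Sum>v\<in>S. card {e\<in>{e\<in>G. P e}. v \<in> e})"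
    by (rule sum.cong[OF refl]) (metis (mono_tags, lifting) mem_Collect_eq)
  also have "\<dots> = (\<Sum>e\<in>{e\<in>G. P e}. card {v\<in>S. v \<in> e})"
    using assms by (intro sum_card_filter_swap) auto
  also have "\<dots> = (\<Sum>e\<in>{e\<in>G. P e}. card (e \<inter> S))"
    by (rule sum.cong[OF refl]) (metis Collect_mem_eq Int_commute Int_def)
  finally show ?thesis .
qed

lemma card_edge_inter:
  assumes "simple_graph G" "e \<in> G"
  shows "card (e \<inter> X) = (if e \<subseteq> X then 2 else if e \<inter> X = {} then 0 else 1)"
proof -
  obtain a b where "a \<noteq> b" "e = {a, b}" using simple_graph_edgeE[OF assms] .
  thus ?thesis by (cases "a \<in> X"; cases "b \<in> X") (auto simp: Int_absorb2)
qed

lemma finite_ex_candidates: "finite G \<Longrightarrow> finite {card F | F. F \<subseteq> G \<and> \<not> contains_copy F H}"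
  by (rule finite_subset[of _ "card ` Pow G"]) auto

lemma card_le_ex:
  assumes "finite G" "F \<subseteq> G" "P3_free F"
  shows "card F \<le> ex G P3"
proof -
  have "card F \<in> {card F | F. F \<subseteq> G \<and> \<not> contains_copy F P3}"
    using assms(2,3) contains_copy_P3_iff by blast
  thus ?thesis unfolding ex_def by (rule Max_ge[OF finite_ex_candidates[OF assms(1)]])
qed

lemma ex_attained:
  assumes "finite G"
  obtains F where "F \<subseteq> G" "P3_free F" "card F = ex G P3"
proof -
  have "P3_free {}" unfolding P3_free_def by blast
  hence "{card F | F. F \<subseteq> G \<and> \<not> contains_copy F P3} \<noteq> {}"
    using contains_copy_P3_iff by blast
  hence "ex G P3 \<in> {card F | F. F \<subseteq> G \<and> \<not> contains_copy F P3}"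
    unfolding ex_def using Max_in[OF finite_ex_candidates[OF assms]] by blast
  then obtain F where "ex G P3 = card F" "F \<subseteq> G" "\<not> contains_copy F P3" by blast
  thus ?thesis using that contains_copy_P3_iff by metis
qed

lemma card_disjoint_le_ex:
  assumes G: "simple_graph G" and sub: "F1 \<subseteq> G" "F2 \<subseteq> G"
    and free: "P3_free F1" "P3_free F2" and disj: "\<Union>F1 \<inter> \<Union>F2 = {}"
  shows "card F1 + card F2 \<le> ex G P3"
proof -
  have "finite G" using G unfolding simple_graph_def by blast
  hence fin: "finite G" "finite F1" "finite F2" using sub finite_subset by blast+
  have "F1 \<inter> F2 = {}"
  proof (rule ccontr)
    assume "F1 \<inter> F2 \<noteq> {}"
    then obtain e where "e \<in> F1" "e \<in> F2" by blast
    moreover have "e \<noteq> {}" using simple_graph_edge_nonempty G sub calculation by blast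
    ultimately show False using disj by blast
  qed
  hence "card F1 + card F2 = card (F1 \<union> F2)" using fin by (simp add: card_Un_disjoint)
  also have "\<dots> \<le> ex G P3"
    using fin(1) P3_free_Un_disjoint[OF free disj] sub by (intro card_le_ex) auto
  finally show ?thesis .
qed

definition edge_bound :: "nat \<Rightarrow> nat" where
  "edge_bound s = (Suc s choose 2) + (if s = 2 then 1 else 0)"

lemma twice_edge_bound: "2 * edge_bound s = s * Suc s + (if s = 2 then 2 else 0)"
proof -
  have "2 * (Suc s choose 2) = s * Suc s" by (induction s) (simp_all add: numeral_2_eq_2)
  thus ?thesis unfolding edge_bound_def by simp
qed

lemma edge_bound_mono: "a \<le> b \<Longrightarrow> edge_bound a \<le> edge_bound b"
proof -
  assume ab: "a \<le> b"
  have "a * Suc a \<le> b * Suc b" using ab by (intro mult_le_mono) auto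
  moreover have "a = 2 \<Longrightarrow> b \<noteq> 2 \<Longrightarrow> 3 * Suc 3 \<le> b * Suc b" using ab by (intro mult_le_mono) auto
  ultimately have "2 * edge_bound a \<le> 2 * edge_bound b"
    unfolding twice_edge_bound by (cases "a = 2"; cases "b = 2") auto
  thus ?thesis by simp
qed

text \<open>The arithmetic of the induction step: \<open>SA\<close> is the degree sum over the neighbourhood of \<open>c\<close>,
  \<open>cr\<close> the number of edges leaving the closed neighbourhood, and \<open>t = ex(G, P\<^sub>3) - d\<close>.\<close>
lemma edge_bound_step:
  fixes d t SA cr :: nat
  assumes d: "1 \<le> d" and SA: "SA \<le> d * d" and cr: "cr \<le> d * (d - 1)" "0 < t \<Longrightarrow> cr \<le> d * (t + 1)"
    and extremal: "t = 0 \<Longrightarrow> SA + cr \<le> d * d + (if d = 2 then 2 else 0)"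
  shows "d + SA + cr + 2 * edge_bound t \<le> 2 * edge_bound (d + t)"
proof (cases "t = 0")
  case True
  thus ?thesis using extremal unfolding twice_edge_bound by (simp add: algebra_simps)
next
  case False
  have expand: "(d + t) * Suc (d + t) = d * d + 2 * (d * t) + d + t * Suc t"
    by (simp add: algebra_simps)
  have "SA + cr + (if t = 2 then 2 else 0) \<le> d * d + 2 * (d * t) + (if d + t = 2 then 2 else 0)"
  proof (cases "t = 2")
    case True
    thus ?thesis using SA cr d by (cases "d = 1") (auto simp: algebra_simps)
  next
    case False
    have "d \<le> d * t" "cr \<le> d + d * t" using cr(2) \<open>t \<noteq> 0\<close> by (simp_all add: algebra_simps)
    hence "SA + cr \<le> d * d + 2 * (d * t)" using SA by linarith
    thus ?thesis using False by simp
  qed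
  thus ?thesis unfolding twice_edge_bound expand by simp
qed

locale max_degree_vertex =
  fixes G :: "'a set set" and c :: 'a and d s :: nat
  assumes simple: "simple_graph G"
    and degree_le: "\<And>v. card (nbhd G v) \<le> d"
    and degree_c: "card (nbhd G c) = d"
    and s_eq: "s = ex G P3"
begin

definition A :: "'a set" where "A = nbhd G c"
definition X :: "'a set" where "X = insert c A"
definition T :: "'a set set" where "T = {e\<in>G. e \<inter> X \<noteq> {}}"
definition outer :: "'a \<Rightarrow> 'a set" where "outer a = nbhd G a - X"
definition nonadj :: "'a \<Rightarrow> 'a set" where "nonadj a = A - {a} - nbhd G a"

lemma finite_G: "finite G" using simple unfolding simple_graph_def by blast
lemma finite_A: "finite A" unfolding A_def using finite_nbhd[OF simple] .
lemma finite_X: "finite X" unfolding X_def using finite_A by simp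
lemma finite_outer: "finite (outer a)" unfolding outer_def using finite_nbhd[OF simple] by simp
lemma finite_nonadj: "finite (nonadj a)" unfolding nonadj_def using finite_A by simp
lemma c_notin_A: "c \<notin> A" unfolding A_def using not_in_nbhd[OF simple] .
lemma card_A: "card A = d" unfolding A_def using degree_c .
lemma c_in_nbhd: "a \<in> A \<Longrightarrow> c \<in> nbhd G a" unfolding A_def using nbhd_sym by metis

lemma nonadj_sym: "x \<in> A \<Longrightarrow> y \<in> A \<Longrightarrow> x \<in> nonadj y \<longleftrightarrow> y \<in> nonadj x"
  unfolding nonadj_def using nbhd_sym[of x G y] by auto

lemma star_edges_subset: "L \<subseteq> nbhd G x \<Longrightarrow> star_edges x L \<subseteq> G"
  unfolding star_edges_def nbhd_def by blast

lemma star_c_subset: "L \<subseteq> A \<Longrightarrow> star_edges c L \<subseteq> G"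
  unfolding A_def by (rule star_edges_subset)

lemma card_star_c: "L \<subseteq> A \<Longrightarrow> card (star_edges c L) = card L"
  using card_star_edges[OF finite_subset[OF _ finite_A]] c_notin_A by blast

lemma card_le_s: "F \<subseteq> G \<Longrightarrow> P3_free F \<Longrightarrow> card F \<le> s"
  unfolding s_eq using card_le_ex finite_G by blast

lemma disjoint_le_s:
  assumes "F1 \<subseteq> G" "F2 \<subseteq> G" "P3_free F1" "P3_free F2" "\<Union>F1 \<inter> \<Union>F2 = {}"
  shows "card F1 + card F2 \<le> s"
  unfolding s_eq using assms by (rule card_disjoint_le_ex[OF simple])

lemma d_le_s: "d \<le> s"
proof -
  have "card (star_edges c A) \<le> s" by (intro card_le_s star_c_subset P3_free_star_edges) simp
  thus ?thesis using card_star_c[of A] card_A by simp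
qed

lemma twice_card_T: "2 * card T = d + (\<Sum>a\<in>A. card (nbhd G a)) + (\<Sum>a\<in>A. card (outer a))"
proof -
  have inner: "(\<Sum>v\<in>X. card (nbhd G v)) = (\<Sum>e\<in>G. card (e \<inter> X))"
    using sum_card_incident[OF finite_G finite_X, of "\<lambda>_. True"]
      card_incident_edges[OF simple, of _ "\<lambda>_. True"] by simp
  have "(\<Sum>v\<in>X. card (outer v)) = (\<Sum>v\<in>X. card {e\<in>G. v \<in> e \<and> \<not> e \<subseteq> X})"
    using card_incident_edges[OF simple, of _ "\<lambda>e. \<not> e \<subseteq> X"]
    by (intro sum.cong) (auto simp: outer_def intro!: arg_cong[where f = card])
  also have "\<dots> = (\<Sum>e\<in>{e\<in>G. \<not> e \<subseteq> X}. card (e \<inter> X))"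
    by (rule sum_card_incident[OF finite_G finite_X])
  also have "\<dots> = (\<Sum>e\<in>G. if \<not> e \<subseteq> X then card (e \<inter> X) else 0)"
    using sum.inter_filter[OF finite_G, of "\<lambda>e. card (e \<inter> X)" "\<lambda>e. \<not> e \<subseteq> X"]
    by simp
  finally have crossing: "(\<Sum>v\<in>X. card (outer v)) = \<dots>" .
  have "2 * card T = (\<Sum>e\<in>G. if e \<in> T then 2 else 0)"
    using sum.inter_filter[OF finite_G, of "\<lambda>_. 2::nat" "\<lambda>e. e \<in> T"] by (simp add: T_def)
  also have "\<dots> = (\<Sum>e\<in>G. card (e \<inter> X) + (if \<not> e \<subseteq> X then card (e \<inter> X) else 0))"
    using simple_graph_edge_nonempty[OF simple]
    by (intro sum.cong) (auto simp: card_edge_inter[OF simple] T_def)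
  also have "\<dots> = (\<Sum>v\<in>X. card (nbhd G v)) + (\<Sum>v\<in>X. card (outer v))"
    unfolding inner crossing by (rule sum.distrib)
  also have "\<dots> = d + (\<Sum>a\<in>A. card (nbhd G a)) + (\<Sum>a\<in>A. card (outer a))"
    using finite_A c_notin_A degree_c by (simp add: X_def outer_def A_def)
  finally show ?thesis .
qed


lemma two_le_d: "x \<in> A \<Longrightarrow> z \<in> A \<Longrightarrow> x \<noteq> z \<Longrightarrow> 2 \<le> d"
  using card_mono[OF finite_A, of "{x, z}"] card_A by simp

lemma card_A_minus_two: "x \<in> A \<Longrightarrow> z \<in> A \<Longrightarrow> x \<noteq> z \<Longrightarrow> card (A - {x, z}) = d - 2"
  using finite_A card_A by simp

lemma card_outer_plus_le_s:
  assumes a: "a \<in> A"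
  shows "card (outer a) + (d - 1) \<le> s"
proof -
  have "\<Union>(star_edges a (outer a)) \<inter> \<Union>(star_edges c (A - {a})) = {}"
    using Union_star_edges_subset[of a] Union_star_edges_subset[of c] a c_notin_A
    unfolding outer_def X_def by blast
  hence "card (star_edges a (outer a)) + card (star_edges c (A - {a})) \<le> s"
    by (intro disjoint_le_s star_edges_subset star_c_subset P3_free_star_edges) (auto simp: outer_def)
  moreover have "card (star_edges a (outer a)) = card (outer a)"
    using finite_outer not_in_nbhd[OF simple] by (intro card_star_edges) (auto simp: outer_def)
  moreover have "card (star_edges c (A - {a})) = d - 1"
    using card_star_c[of "A - {a}"] finite_A card_A a by simp
  ultimately show ?thesis by simp
qed

lemma card_outer_le: "a \<in> A \<Longrightarrow> card (outer a) \<le> d - 1"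
proof -
  assume a: "a \<in> A"
  have "card (outer a) \<le> card (nbhd G a - {c})"
    using c_in_nbhd[OF a] finite_nbhd[OF simple] by (intro card_mono) (auto simp: outer_def X_def)
  also have "\<dots> \<le> d - 1" using c_in_nbhd[OF a] finite_nbhd[OF simple] degree_le[of a] by simp
  finally show ?thesis .
qed

lemma card_inner_plus_nonadj: "a \<in> A \<Longrightarrow> card (nbhd G a \<inter> A) + card (nonadj a) = d - 1"
proof -
  assume a: "a \<in> A"
  have inner: "nbhd G a \<inter> A \<subseteq> A - {a}" using not_in_nbhd[OF simple] by blast
  have "nonadj a = (A - {a}) - (nbhd G a \<inter> A)" unfolding nonadj_def by blast
  hence "card (nonadj a) = card (A - {a}) - card (nbhd G a \<inter> A)"
    using inner finite_A by (simp add: card_Diff_subset finite_subset)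
  moreover have "card (nbhd G a \<inter> A) \<le> card (A - {a})" using inner finite_A by (intro card_mono) auto
  moreover have "card (A - {a}) = d - 1" using a finite_A card_A by simp
  ultimately show ?thesis by simp
qed

lemma card_nbhd_split: "a \<in> A \<Longrightarrow> card (nbhd G a) = 1 + card (nbhd G a \<inter> A) + card (outer a)"
proof -
  assume a: "a \<in> A"
  define S where "S = (nbhd G a \<inter> A) \<union> outer a"
  have "nbhd G a = insert c S" using c_in_nbhd[OF a] unfolding S_def outer_def X_def by blast
  moreover have "c \<notin> S" using c_notin_A unfolding S_def outer_def X_def by blast
  moreover have "finite S" using finite_A finite_outer unfolding S_def by blast
  ultimately have "card (nbhd G a) = 1 + card S" by simp
  moreover have "(nbhd G a \<inter> A) \<inter> outer a = {}" unfolding outer_def X_def by blast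
  ultimately show ?thesis using finite_A finite_outer unfolding S_def by (simp add: card_Un_disjoint)
qed

lemma card_nbhd_plus_nonadj: "a \<in> A \<Longrightarrow> card (nbhd G a) + card (nonadj a) = d + card (outer a)"
proof -
  assume a: "a \<in> A"
  hence "d \<noteq> 0" using finite_A card_A by (auto simp: card_gt_0_iff)
  thus ?thesis using card_nbhd_split[OF a] card_inner_plus_nonadj[OF a] by simp
qed


text \<open>Witness: the triangle \<open>x\<^sub>1 x\<^sub>2 w\<close> next to the star from \<open>c\<close> to \<open>A - {x\<^sub>1, x\<^sub>2}\<close>.\<close>
lemma common_outer_imp_less:
  assumes x: "x1 \<in> A" "x2 \<in> A" "x1 \<noteq> x2" "x2 \<in> nbhd G x1"
    and w: "w \<in> outer x1" "w \<in> outer x2"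
  shows "d < s"
proof -
  have "triangle_edges x1 x2 w \<subseteq> G"
    using x(4) w unfolding triangle_edges_def outer_def nbhd_def by (auto simp: insert_commute)
  moreover have "\<Union>(triangle_edges x1 x2 w) \<inter> \<Union>(star_edges c (A - {x1, x2})) = {}"
    using Union_star_edges_subset[of c] w x c_notin_A unfolding Union_triangle outer_def X_def by blast
  ultimately have "card (triangle_edges x1 x2 w) + card (star_edges c (A - {x1, x2})) \<le> s"
    by (intro disjoint_le_s star_c_subset P3_free_triangle P3_free_star_edges) auto
  moreover have "card (triangle_edges x1 x2 w) = 3"
    using x w by (intro card_triangle) (auto simp: outer_def X_def)
  moreover have "card (star_edges c (A - {x1, x2})) = d - 2"
    using card_star_c card_A_minus_two x by (metis Diff_subset)
  ultimately show ?thesis using two_le_d[OF x(1-3)] by simp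
qed

text \<open>Witness: the star from \<open>x\<close> to \<open>c\<close>, \<open>w\<close> and \<open>A - {x, z}\<close>, next to the edge \<open>z w'\<close>.\<close>
lemma distinct_outer_imp_less:
  assumes x: "x \<in> A" and outer_x: "outer x = {w}" and nonadj_x: "nonadj x = {z}"
    and w': "w' \<in> outer z" "w' \<noteq> w"
  shows "d < s"
proof -
  have z: "z \<in> A" "z \<noteq> x" using nonadj_x unfolding nonadj_def by blast+
  have w: "w \<notin> X" "w \<in> nbhd G x" using outer_x unfolding outer_def by blast+
  define L where "L = insert c (insert w (A - {x, z}))"
  have "L \<subseteq> nbhd G x"
    using c_in_nbhd[OF x] w nonadj_x unfolding L_def nonadj_def by blast
  moreover have "\<Union>(star_edges x L) \<inter> \<Union>(star_edges z {w'}) = {}"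
    using Union_star_edges_subset[of x L] Union_star_edges_subset[of z "{w'}"] z w w' x c_notin_A
    unfolding L_def X_def outer_def by blast
  ultimately have "card (star_edges x L) + card (star_edges z {w'}) \<le> s"
    using w' unfolding outer_def
    by (intro disjoint_le_s star_edges_subset P3_free_star_edges) auto
  moreover have "card (star_edges z {w'}) = 1"
    using w' z unfolding outer_def X_def by (subst card_star_edges) auto
  moreover have "card (star_edges x L) = d"
  proof -
    have "c \<notin> insert w (A - {x, z})" "w \<notin> A - {x, z}" using w c_notin_A unfolding X_def by auto
    hence "card L = d" using card_A_minus_two[OF x z(1) z(2)[symmetric]] two_le_d[OF x z(1)] z(2)
      unfolding L_def using finite_A by simp
    moreover have "x \<notin> L" using w c_notin_A x unfolding L_def X_def by auto
    ultimately show ?thesis using finite_A unfolding L_def by (subst card_star_edges) auto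
  qed
  ultimately show ?thesis by simp
qed

text \<open>Witness: a triangle \<open>c x e\<close> next to the star from \<open>z\<close> to \<open>w\<close> and its other neighbours in \<open>A\<close>.\<close>
lemma shared_outer_imp_less:
  assumes x: "x \<in> A" and outer_x: "outer x = {w}" and nonadj_x: "nonadj x = {z}"
    and outer_z: "outer z = {w}" and nonadj_z: "card (nonadj z) \<le> 2" and d: "3 \<le> d"
  shows "d < s"
proof -
  have z: "z \<in> A" "z \<noteq> x" "z \<notin> nbhd G x" using nonadj_x unfolding nonadj_def by blast+
  hence x_z: "x \<notin> nbhd G z" using nbhd_sym[of x G z] by simp
  have x_nonadj_z: "x \<in> nonadj z" using nonadj_sym[OF x z(1)] nonadj_x by blast
  have w: "w \<notin> X" "w \<in> nbhd G x" "w \<in> nbhd G z" using outer_x outer_z unfolding outer_def by blast+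
  obtain e where e: "e \<in> A" "e \<noteq> x" "e \<noteq> z" and e_nonadj: "card (nonadj z) = 2 \<Longrightarrow> e \<notin> nbhd G z"
  proof (cases "card (nonadj z) = 2")
    case True
    then obtain p q where "p \<noteq> q" "nonadj z = {p, q}" by (meson card_2_iff)
    then obtain e where "e \<in> nonadj z" "e \<noteq> x" by blast
    thus ?thesis using that unfolding nonadj_def by blast
  next
    case False
    have "card (A - {x, z}) \<noteq> 0" using card_A_minus_two[OF x z(1) z(2)[symmetric]] d by simp
    hence "A - {x, z} \<noteq> {}" by (metis card.empty)
    thus ?thesis using that False by blast
  qed
  define L where "L = insert w (nbhd G z \<inter> A - {e})"
  have "triangle_edges c x e \<subseteq> G"
  proof -
    have "e \<in> nbhd G x" using e nonadj_x unfolding nonadj_def by blast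
    thus ?thesis using x e unfolding triangle_edges_def A_def nbhd_def by (auto simp: insert_commute)
  qed
  moreover have "star_edges z L \<subseteq> G" using w unfolding L_def by (intro star_edges_subset) auto
  moreover have "\<Union>(triangle_edges c x e) \<inter> \<Union>(star_edges z L) = {}"
  proof -
    have "{c, x, e} \<inter> insert z L = {}"
      using z x_z e w c_notin_A x unfolding L_def X_def by auto
    thus ?thesis using Union_star_edges_subset[of z L] unfolding Union_triangle by blast
  qed
  ultimately have "card (triangle_edges c x e) + card (star_edges z L) \<le> s"
    by (intro disjoint_le_s P3_free_triangle P3_free_star_edges)
  moreover have "card (triangle_edges c x e) = 3" using x e c_notin_A by (intro card_triangle) auto
  moreover have "d - 2 \<le> card (star_edges z L)"
  proof -
    have "1 \<le> card (nonadj z)" using x_nonadj_z finite_nonadj by (auto simp: Suc_le_eq card_gt_0_iff)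
    have "d - 3 \<le> card (nbhd G z \<inter> A - {e})"
    proof (cases "e \<in> nbhd G z")
      case True
      hence "card (nonadj z) = 1" using e_nonadj nonadj_z \<open>1 \<le> card (nonadj z)\<close> by linarith
      moreover have "card (nbhd G z \<inter> A - {e}) = card (nbhd G z \<inter> A) - 1"
        using True e(1) finite_A by simp
      ultimately show ?thesis using card_inner_plus_nonadj[OF z(1)] by simp
    next
      case False
      thus ?thesis using card_inner_plus_nonadj[OF z(1)] nonadj_z by simp
    qed
    moreover have "w \<notin> nbhd G z \<inter> A - {e}" using w unfolding X_def by blast
    ultimately have "d - 2 \<le> card L" unfolding L_def using finite_A d by simp
    moreover have "z \<notin> L" using w not_in_nbhd[OF simple, of z] unfolding L_def X_def by auto
    ultimately show ?thesis using finite_A unfolding L_def by (subst card_star_edges) auto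
  qed
  ultimately show ?thesis using d by simp
qed

text \<open>Charging in the extremal case \<open>s = d\<close>: each \<open>y \<in> A\<close> pays \<open>2 |outer y|\<close> out of its
  \<open>|nonadj y|\<close> non-neighbours in \<open>A\<close>. A tight vertex can pay only one; the rest is paid by its
  unique non-neighbour, which has at least three non-neighbours and serves at most one tight vertex.\<close>

definition tight :: "'a set" where
  "tight = {x\<in>A. card (outer x) = 1 \<and> card (nonadj x) = 1}"

lemma card_outer_le_one:
  assumes "s = d" "3 \<le> d" "a \<in> A"
  shows "card (outer a) \<le> 1"
  using card_outer_plus_le_s[OF assms(3)] assms(1,2) by simp

lemma tight_partner:
  assumes sd: "s = d" and y: "y \<in> A" and outer_y: "outer y = {w}"
    and x: "x \<in> tight" "x \<in> nonadj y"
  shows "outer x = {w}" "nonadj x = {y}"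
proof -
  have x_A: "x \<in> A" using x(1) unfolding tight_def by blast
  obtain z where "nonadj x = {z}" using x(1) unfolding tight_def by (auto simp: card_1_singleton_iff)
  moreover have "y \<in> nonadj x" using nonadj_sym[OF x_A y] x(2) by blast
  ultimately show nonadj_x: "nonadj x = {y}" by auto
  obtain w' where outer_x: "outer x = {w'}" using x(1) unfolding tight_def by (auto simp: card_1_singleton_iff)
  have "w = w'" using distinct_outer_imp_less[OF x_A outer_x nonadj_x, of w] outer_y sd by auto
  thus "outer x = {w}" using outer_x by simp
qed

lemma card_tight_nonadj_le_one:
  assumes sd: "s = d" and y: "y \<in> A" and outer_y: "outer y = {w}"
  shows "card (tight \<inter> nonadj y) \<le> 1"
proof -
  have "x1 = x2" if x: "x1 \<in> tight \<inter> nonadj y" "x2 \<in> tight \<inter> nonadj y" for x1 x2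
  proof (rule ccontr)
    assume ne: "x1 \<noteq> x2"
    have A: "x1 \<in> A" "x2 \<in> A" using x unfolding tight_def by blast+
    have "x2 \<notin> nonadj x1" using tight_partner[OF sd y outer_y] x unfolding nonadj_def by blast
    hence "x2 \<in> nbhd G x1" using A ne unfolding nonadj_def by blast
    moreover have "w \<in> outer x1" "w \<in> outer x2" using tight_partner[OF sd y outer_y] x by blast+
    ultimately show False using common_outer_imp_less[OF A ne] sd by simp
  qed
  moreover have "finite (tight \<inter> nonadj y)" using finite_nonadj by blast
  ultimately show ?thesis using card_le_Suc0_iff_eq by (metis One_nat_def)
qed

lemma card_nonadj_ge_three:
  assumes sd: "s = d" and d: "3 \<le> d" and y: "y \<in> A" and outer_y: "outer y = {w}"
    and x: "x \<in> tight" "x \<in> nonadj y"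
  shows "3 \<le> card (nonadj y)"
proof (rule ccontr)
  assume "\<not> 3 \<le> card (nonadj y)"
  moreover have "x \<in> A" using x(1) unfolding tight_def by blast
  ultimately have "d < s"
    using shared_outer_imp_less[OF _ tight_partner[OF sd y outer_y x] outer_y _ d] by simp
  thus False using sd by simp
qed

lemma charge_le:
  assumes sd: "s = d" and d: "3 \<le> d" and y: "y \<in> A"
  shows "2 * card (outer y) + card (tight \<inter> nonadj y) \<le> card (nonadj y) + (if y \<in> tight then 1 else 0)"
proof (cases "card (outer y) = 0")
  case True
  have "card (tight \<inter> nonadj y) \<le> card (nonadj y)" using finite_nonadj by (intro card_mono) auto
  thus ?thesis using True by simp
next
  case False
  hence one: "card (outer y) = 1" using card_outer_le_one[OF sd d y] by simp
  then obtain w where outer_y: "outer y = {w}" by (auto simp: card_1_singleton_iff)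
  show ?thesis
  proof (cases "tight \<inter> nonadj y = {}")
    case True
    have "1 \<le> card (nonadj y)" using card_nbhd_plus_nonadj[OF y] degree_le[of y] one by simp
    moreover have "y \<in> tight \<longleftrightarrow> card (nonadj y) = 1" using y one unfolding tight_def by blast
    ultimately show ?thesis using True one by (cases "y \<in> tight") auto
  next
    case False
    then obtain x where "x \<in> tight" "x \<in> nonadj y" by blast
    hence "3 \<le> card (nonadj y)" by (rule card_nonadj_ge_three[OF sd d y outer_y])
    thus ?thesis using one card_tight_nonadj_le_one[OF sd y outer_y] by simp
  qed
qed

lemma tight_subset: "tight \<subseteq> A"
  unfolding tight_def by blast

lemma sum_card_tight_nonadj: "(\<Sum>y\<in>A. card (tight \<inter> nonadj y)) = card tight"
proof -
  have fin: "finite tight" using finite_subset[OF tight_subset finite_A] .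
  have "(\<Sum>y\<in>A. card (tight \<inter> nonadj y)) = (\<Sum>y\<in>A. card {x\<in>tight. x \<in> nonadj y})"
    by (simp only: Int_def)
  also have "\<dots> = (\<Sum>x\<in>tight. card {y\<in>A. x \<in> nonadj y})"
    by (rule sum_card_filter_swap[OF finite_A fin])
  also have "\<dots> = (\<Sum>x\<in>tight. 1)"
  proof (rule sum.cong[OF refl])
    fix x assume x: "x \<in> tight"
    hence "x \<in> A" unfolding tight_def by blast
    hence "{y\<in>A. x \<in> nonadj y} = nonadj x" using nonadj_sym unfolding nonadj_def by blast
    thus "card {y\<in>A. x \<in> nonadj y} = 1" using x unfolding tight_def by simp
  qed
  finally show ?thesis by simp
qed

lemma sum_outer_le_nonadj:
  assumes "s = d" "3 \<le> d"
  shows "(\<Sum>a\<in>A. 2 * card (outer a)) \<le> (\<Sum>a\<in>A. card (nonadj a))"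
proof -
  have "(\<Sum>a\<in>A. 2 * card (outer a)) + card tight
      = (\<Sum>a\<in>A. 2 * card (outer a) + card (tight \<inter> nonadj a))"
    by (simp add: sum.distrib sum_card_tight_nonadj)
  also have "\<dots> \<le> (\<Sum>a\<in>A. card (nonadj a) + (if a \<in> tight then 1 else 0))"
    by (rule sum_mono) (rule charge_le[OF assms])
  also have "\<dots> = (\<Sum>a\<in>A. card (nonadj a)) + card tight"
    using finite_A tight_subset by (simp add: sum.distrib sum.If_cases Int_absorb1)
  finally show ?thesis by simp
qed

lemma sum_nbhd_outer_le_extremal:
  assumes "s = d" "3 \<le> d"
  shows "(\<Sum>a\<in>A. card (nbhd G a)) + (\<Sum>a\<in>A. card (outer a)) \<le> d * d"
proof -
  have "(\<Sum>a\<in>A. card (nbhd G a) + card (outer a) + card (nonadj a)) = (\<Sum>a\<in>A. d + 2 * card (outer a))"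
  proof (rule sum.cong[OF refl])
    fix a assume "a \<in> A"
    from card_nbhd_plus_nonadj[OF this]
    show "card (nbhd G a) + card (outer a) + card (nonadj a) = d + 2 * card (outer a)" by simp
  qed
  hence "(\<Sum>a\<in>A. card (nbhd G a)) + (\<Sum>a\<in>A. card (outer a)) + (\<Sum>a\<in>A. card (nonadj a))
      = (\<Sum>a\<in>A. d + 2 * card (outer a))"
    by (simp add: sum.distrib)
  thus ?thesis using sum_outer_le_nonadj[OF assms] card_A by (simp add: sum.distrib)
qed

lemma sum_nbhd_le: "(\<Sum>a\<in>A. card (nbhd G a)) \<le> d * d"
  using sum_mono[of A "\<lambda>a. card (nbhd G a)" "\<lambda>_. d"] degree_le card_A by simp

lemma card_T_le: "1 \<le> d \<Longrightarrow> card T + edge_bound (s - d) \<le> edge_bound s"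
proof -
  assume d: "1 \<le> d"
  define SA where "SA = (\<Sum>a\<in>A. card (nbhd G a))"
  define cr where "cr = (\<Sum>a\<in>A. card (outer a))"
  have SA: "SA \<le> d * d" unfolding SA_def by (rule sum_nbhd_le)
  have "cr \<le> (\<Sum>a\<in>A. d - 1)" unfolding cr_def by (rule sum_mono) (rule card_outer_le)
  hence cr1: "cr \<le> d * (d - 1)" using card_A by simp
  have "cr \<le> (\<Sum>a\<in>A. s - d + 1)" unfolding cr_def
  proof (rule sum_mono)
    fix a assume "a \<in> A"
    from card_outer_plus_le_s[OF this] show "card (outer a) \<le> s - d + 1" using d by simp
  qed
  hence cr2: "cr \<le> d * (s - d + 1)" using card_A by simp
  have extremal: "SA + cr \<le> d * d + (if d = 2 then 2 else 0)" if "s - d = 0"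
  proof (cases "3 \<le> d")
    case True
    thus ?thesis using sum_nbhd_outer_le_extremal d_le_s that unfolding SA_def cr_def by simp
  next
    case False
    hence "d = 1 \<or> d = 2" using d by auto
    thus ?thesis using SA cr1 by auto
  qed
  have "d + SA + cr + 2 * edge_bound (s - d) \<le> 2 * edge_bound (d + (s - d))"
    by (rule edge_bound_step[OF d SA cr1 cr2 extremal])
  thus ?thesis using twice_card_T d_le_s unfolding SA_def cr_def by simp
qed

lemma card_G_split: "card G = card {e\<in>G. e \<inter> X = {}} + card T"
proof -
  have "G = {e\<in>G. e \<inter> X = {}} \<union> T" "{e\<in>G. e \<inter> X = {}} \<inter> T = {}" unfolding T_def by blast+
  thus ?thesis using finite_G card_Un_disjoint unfolding T_def by (metis (no_types, lifting) finite_Un)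
qed

lemma T_nonempty: "1 \<le> d \<Longrightarrow> T \<noteq> {}"
proof -
  assume "1 \<le> d"
  then obtain u where "u \<in> A" using card_A by fastforce
  hence "{c, u} \<in> T" unfolding T_def A_def X_def nbhd_def by blast
  thus ?thesis by blast
qed

text \<open>A star from \<open>c\<close> to \<open>A\<close> can be added to any \<open>P\<^sub>3\<close>-free subgraph avoiding \<open>X\<close>.\<close>
lemma ex_delete_closed_nbhd_le: "ex {e\<in>G. e \<inter> X = {}} P3 + d \<le> s"
proof -
  obtain F where F: "F \<subseteq> {e\<in>G. e \<inter> X = {}}" "P3_free F" "card F = ex {e\<in>G. e \<inter> X = {}} P3"
    using ex_attained finite_G by (metis (no_types, lifting) finite_subset mem_Collect_eq subsetI)
  have "\<Union>F \<inter> \<Union>(star_edges c A) = {}"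
    using F(1) Union_star_edges_subset[of c A] unfolding X_def by blast
  hence "card F + card (star_edges c A) \<le> s"
    using F(1,2) by (intro disjoint_le_s star_c_subset P3_free_star_edges) auto
  thus ?thesis using F(3) card_star_c[of A] card_A by simp
qed

end

lemma max_degree_vertex_exists:
  assumes G: "simple_graph G" "G \<noteq> {}"
  obtains c d where "max_degree_vertex G c d (ex G P3)" "1 \<le> d"
proof -
  define V where "V = \<Union>G"
  have fin: "finite V" unfolding V_def using finite_vertices[OF G(1)] .
  obtain e where e: "e \<in> G" using G(2) by blast
  then obtain a b where "a \<noteq> b" "e = {a, b}" using simple_graph_edgeE[OF G(1)] by blast
  hence "b \<in> nbhd G a" "a \<in> V" using e unfolding nbhd_def V_def by auto
  hence "0 < card (nbhd G a)" using finite_nbhd[OF G(1)] by (auto simp: card_gt_0_iff)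
  define d where "d = Max ((\<lambda>v. card (nbhd G v)) ` V)"
  have "d \<in> (\<lambda>v. card (nbhd G v)) ` V" unfolding d_def using fin \<open>a \<in> V\<close> by (intro Max_in) auto
  then obtain c where c: "card (nbhd G c) = d" by blast
  have "card (nbhd G v) \<le> d" for v
  proof (cases "v \<in> V")
    case True thus ?thesis unfolding d_def using fin by simp
  next
    case False
    hence "nbhd G v = {}" unfolding V_def nbhd_def by blast
    thus ?thesis by simp
  qed
  moreover have "1 \<le> d" using calculation[of a] \<open>0 < card (nbhd G a)\<close> by simp
  ultimately show ?thesis using that[of c d] G(1) c by (simp add: max_degree_vertex_def)
qed

theorem card_le_edge_bound_ex: "simple_graph G \<Longrightarrow> card G \<le> edge_bound (ex G P3)"
proof (induction "card G" arbitrary: G rule: less_induct)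
  case less
  show ?case
  proof (cases "G = {}")
    case False
    then obtain c d where "max_degree_vertex G c d (ex G P3)" "1 \<le> d"
      using max_degree_vertex_exists less.prems by blast
    then interpret max_degree_vertex G c d "ex G P3" by simp
    define G' where "G' = {e\<in>G. e \<inter> X = {}}"
    have "finite T" using finite_G unfolding T_def by simp
    hence "0 < card T" using T_nonempty \<open>1 \<le> d\<close> by (simp add: card_gt_0_iff)
    hence "card G' < card G" using card_G_split unfolding G'_def by simp
    hence "card G' \<le> edge_bound (ex G' P3)"
      by (rule less.hyps[OF _ simple_graph_subset[OF simple]]) (auto simp: G'_def)
    also have "\<dots> \<le> edge_bound (ex G P3 - d)"
      using ex_delete_closed_nbhd_le unfolding G'_def by (intro edge_bound_mono) simp
    finally show ?thesis using card_G_split card_T_le \<open>1 \<le> d\<close> unfolding G'_def by simp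
  qed simp
qed

definition pendant_clique :: "nat \<Rightarrow> nat set set" where
  "pendant_clique n = {S. S \<subseteq> {..<n} \<and> card S = 2} \<union> (\<lambda>i. {i, n + i}) ` {..<n}"

lemma finite_pairs_lessThan: "finite {S. S \<subseteq> {..<n::nat} \<and> card S = 2}"
  by (rule finite_subset[of _ "Pow {..<n}"]) auto

lemma simple_graph_pendant_clique: "simple_graph (pendant_clique n)"
  using finite_pairs_lessThan unfolding simple_graph_def pendant_clique_def by auto

lemma card_pendant_clique: "card (pendant_clique n) = (n choose 2) + n"
proof -
  have "card {S. S \<subseteq> {..<n} \<and> card S = 2} = n choose 2"
    using n_subsets[of "{..<n}" 2] by simp
  moreover have "card ((\<lambda>i. {i, n + i}) ` {..<n}) = n"
    by (subst card_image) (auto simp: inj_on_def doubleton_eq_iff)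
  moreover have "{S. S \<subseteq> {..<n} \<and> card S = 2} \<inter> (\<lambda>i. {i, n + i}) ` {..<n} = {}" by auto
  ultimately show ?thesis
    unfolding pendant_clique_def using card_Un_disjoint[OF finite_pairs_lessThan] by simp
qed

lemma pendant_clique_high_edge: "{u, w} \<in> pendant_clique n \<Longrightarrow> n \<le> u \<Longrightarrow> u = n + w"
  unfolding pendant_clique_def by (auto simp: doubleton_eq_iff)

lemma pendant_clique_edge_cases:
  assumes "e \<in> pendant_clique n"
  shows "(\<exists>i<n. e = {i, n + i}) \<or> (\<exists>a b. a < n \<and> b < n \<and> a \<noteq> b \<and> e = {a, b})"
proof (cases "\<exists>i<n. e = {i, n + i}")
  case False
  hence "e \<subseteq> {..<n}" "card e = 2" using assms unfolding pendant_clique_def by auto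
  then obtain a b where "a \<noteq> b" "e = {a, b}" by (meson card_2_iff)
  thus ?thesis using \<open>e \<subseteq> {..<n}\<close> by auto
qed simp

text \<open>In a \<open>P\<^sub>3\<close>-free subgraph of \<open>pendant_clique n\<close> every edge is owned by a vertex \<open>x < n\<close>:
  its lower end if it is pendant, an end of degree one, or the apex of the triangle it lies in.
  No vertex owns two edges, so there are at most \<open>n\<close> edges.\<close>
definition owns :: "nat set set \<Rightarrow> nat \<Rightarrow> nat \<Rightarrow> nat set \<Rightarrow> bool" where
  "owns F n x e \<longleftrightarrow> e \<in> F \<and> (e = {x, n + x} \<or> (x \<in> e \<and> (\<forall>e'\<in>F. x \<in> e' \<longrightarrow> e' = e))
     \<or> (x \<notin> e \<and> (\<forall>y\<in>e. {x, y} \<in> F)))"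

context
  fixes F :: "nat set set" and n :: nat
  assumes sub: "F \<subseteq> pendant_clique n" and free: "P3_free F"
begin

lemma F_edgeE:
  assumes "e \<in> F"
  obtains p q where "p \<noteq> q" "e = {p, q}"
  using simple_graph_edgeE[OF simple_graph_pendant_clique] sub assms by blast

lemma owns_exists:
  assumes e: "e \<in> F"
  shows "\<exists>x<n. owns F n x e"
proof (cases "\<exists>i<n. e = {i, n + i}")
  case True
  thus ?thesis using e unfolding owns_def by blast
next
  case False
  then obtain a b where ab: "a < n" "b < n" "a \<noteq> b" "e = {a, b}"
    using pendant_clique_edge_cases[of e n] sub e by blast
  show ?thesis
  proof (cases "(\<forall>e'\<in>F. a \<in> e' \<longrightarrow> e' = e) \<or> (\<forall>e'\<in>F. b \<in> e' \<longrightarrow> e' = e)")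
    case True
    thus ?thesis using ab e unfolding owns_def by blast
  next
    case False
    then obtain e1 e2 where e1: "e1 \<in> F" "a \<in> e1" "e1 \<noteq> e" and e2: "e2 \<in> F" "b \<in> e2" "e2 \<noteq> e"
      by blast
    obtain u where u: "u \<noteq> a" "e1 = {a, u}"
      using simple_graph_edge_at[OF simple_graph_pendant_clique] sub e1 by blast
    obtain v where v: "v \<noteq> b" "e2 = {b, v}"
      using simple_graph_edge_at[OF simple_graph_pendant_clique] sub e2 by blast
    have "u \<noteq> b" "v \<noteq> a" using u v e1(3) e2(3) ab(4) by (auto simp: insert_commute)
    have "u = v"
    proof (rule ccontr)
      assume "u \<noteq> v"
      have "{u, a} \<in> F" "{a, b} \<in> F" "{b, v} \<in> F"
        using u v e1 e2 e ab by (auto simp: insert_commute)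
      moreover have "distinct [u, a, b, v]"
        using u(1) v(1) ab(3) \<open>u \<noteq> b\<close> \<open>v \<noteq> a\<close> \<open>u \<noteq> v\<close> by auto
      ultimately show False by (rule P3_freeD[OF free])
    qed
    have apex: "{u, a} \<in> F" "{u, b} \<in> F" using u v \<open>u = v\<close> e1 e2 by (auto simp: insert_commute)
    have "u < n"
    proof (rule ccontr)
      assume "\<not> u < n"
      moreover have "{u, a} \<in> pendant_clique n" "{u, b} \<in> pendant_clique n" using apex sub by blast+
      ultimately have "u = n + a" "u = n + b" using pendant_clique_high_edge by simp_all
      thus False using ab(3) by simp
    qed
    moreover have "u \<notin> e" "\<forall>y\<in>e. {u, y} \<in> F" using ab u \<open>u \<noteq> b\<close> apex by auto
    ultimately show ?thesis using e unfolding owns_def by blast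
  qed
qed

lemma apex_unique:
  assumes e: "e \<in> F" "x \<notin> e" "\<forall>y\<in>e. {x, y} \<in> F"
    and e': "e' \<in> F" "x \<notin> e'" "\<forall>y\<in>e'. {x, y} \<in> F"
  shows "e = e'"
proof (rule ccontr)
  assume "e \<noteq> e'"
  obtain p q where pq: "p \<noteq> q" "e = {p, q}" using F_edgeE e(1) .
  obtain p' q' where "p' \<noteq> q'" "e' = {p', q'}" using F_edgeE e'(1) .
  hence "\<not> e' \<subseteq> e" using \<open>e \<noteq> e'\<close> pq by (metis card_2_iff card_subset_eq finite.emptyI finite_insert)
  then obtain u where u: "u \<in> e'" "u \<notin> e" by blast
  have "{u, x} \<in> F" "{x, p} \<in> F" "{p, q} \<in> F"
    using e e' u pq by (auto simp: insert_commute)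
  moreover have "distinct [u, x, p, q]" using u e(2) e'(2) pq by auto
  ultimately show False by (rule P3_freeD[OF free])
qed

lemma apex_not_pendant:
  assumes x: "x < n" "{x, n + x} \<in> F"
    and e: "e \<in> F" "x \<notin> e" "\<forall>y\<in>e. {x, y} \<in> F"
  shows False
proof -
  obtain p q where pq: "p \<noteq> q" "e = {p, q}" using F_edgeE e(1) .
  have "{p, q} \<in> pendant_clique n" "{q, p} \<in> pendant_clique n"
    using e(1) pq sub by (auto simp: insert_commute)
  hence "p = n + x \<Longrightarrow> q = x" "q = n + x \<Longrightarrow> p = x"
    using pendant_clique_high_edge by fastforce+
  hence "n + x \<noteq> p" "n + x \<noteq> q" using e(2) pq by auto
  moreover have "{n + x, x} \<in> F" "{x, p} \<in> F" "{p, q} \<in> F"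
    using x e pq by (auto simp: insert_commute)
  ultimately show False using P3_freeD[OF free, of "n + x" x p q] x(1) e(2) pq by auto
qed

lemma apex_not_leaf:
  assumes e: "e \<in> F" "\<forall>e''\<in>F. x \<in> e'' \<longrightarrow> e'' = e"
    and e': "e' \<in> F" "x \<notin> e'" "\<forall>y\<in>e'. {x, y} \<in> F"
  shows False
proof -
  obtain p q where pq: "p \<noteq> q" "e' = {p, q}" using F_edgeE e'(1) .
  hence "{x, p} = e" "{x, q} = e" using e(2) e'(3) by auto
  hence "{x, p} = {x, q}" by simp
  thus False using pq e'(2) by (auto simp: doubleton_eq_iff)
qed

lemma owns_unique:
  assumes x: "x < n" and o: "owns F n x e1" "owns F n x e2"
  shows "e1 = e2"
proof -
  have ends: "e = {x, n + x} \<or> (\<forall>e'\<in>F. x \<in> e' \<longrightarrow> e' = e)" if "owns F n x e" "x \<in> e" for e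
    using that unfolding owns_def by blast
  have apex: "\<forall>y\<in>e. {x, y} \<in> F" if "owns F n x e" "x \<notin> e" for e
    using that unfolding owns_def by auto
  have in_F: "e \<in> F" if "owns F n x e" for e using that unfolding owns_def by blast
  have mixed: False if "owns F n x e" "x \<in> e" "owns F n x e'" "x \<notin> e'" for e e'
    using ends[OF that(1,2)] in_F[OF that(1)] in_F[OF that(3)] apex[OF that(3,4)] that(4)
      apex_not_pendant[OF x] apex_not_leaf by metis
  consider "x \<in> e1" "x \<in> e2" | "x \<notin> e1" "x \<notin> e2" | "x \<in> e1" "x \<notin> e2" | "x \<notin> e1" "x \<in> e2"
    by blast
  thus ?thesis
  proof cases
    case 1
    thus ?thesis using ends[OF o(1)] ends[OF o(2)] in_F[OF o(1)] in_F[OF o(2)] by metis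
  next
    case 2
    thus ?thesis using apex_unique in_F o apex by blast
  qed (use mixed o in blast)+
qed

lemma card_le_of_pendant_clique: "card F \<le> n"
proof -
  define g where "g e = (SOME x. x < n \<and> owns F n x e)" for e
  have g: "g e < n \<and> owns F n (g e) e" if "e \<in> F" for e
    unfolding g_def by (rule someI_ex) (rule owns_exists[OF that])
  have "inj_on g F" by (rule inj_onI) (metis g owns_unique)
  moreover have "g ` F \<subseteq> {..<n}" using g by blast
  ultimately have "card F \<le> card {..<n}" by (metis card_image card_mono finite_lessThan)
  thus ?thesis by simp
qed

end

lemma ex_pendant_clique_le: "ex (pendant_clique n) P3 \<le> n"
proof -
  obtain F where "F \<subseteq> pendant_clique n" "P3_free F" "card F = ex (pendant_clique n) P3"
    using ex_attained simple_graph_pendant_clique unfolding simple_graph_def by blast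
  thus ?thesis using card_le_of_pendant_clique by metis
qed

definition cycle4 :: "nat set set" where
  "cycle4 = {{0, 1}, {1, 2}, {2, 3}, {3, 0}}"

lemma simple_graph_cycle4: "simple_graph cycle4"
  unfolding simple_graph_def cycle4_def by auto

lemma card_cycle4: "card cycle4 = 4"
  unfolding cycle4_def by (simp add: doubleton_eq_iff)

lemma not_P3_free_cycle4_minus: "\<not> P3_free (cycle4 - {e})"
proof
  assume free: "P3_free (cycle4 - {e})"
  have path: "{a, b} \<in> cycle4 \<Longrightarrow> {b, c} \<in> cycle4 \<Longrightarrow> {c, d} \<in> cycle4 \<Longrightarrow> distinct [a, b, c, d]
      \<Longrightarrow> e \<noteq> {a, b} \<Longrightarrow> e \<noteq> {b, c} \<Longrightarrow> e \<noteq> {c, d} \<Longrightarrow> False" for a b c d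
    using P3_freeD[OF free, of a b c d] by blast
  consider "e = {0, 1}" | "e = {1, 2}" | "e = {2, 3}" | "e \<notin> {{0, 1}, {1, 2}, {2, 3}}" by blast
  thus False
  proof cases
    case 1 show False by (rule path[of 1 2 3 0]) (auto simp: 1 cycle4_def doubleton_eq_iff)
  next
    case 2 show False by (rule path[of 2 3 0 1]) (auto simp: 2 cycle4_def doubleton_eq_iff)
  next
    case 3 show False by (rule path[of 3 0 1 2]) (auto simp: 3 cycle4_def doubleton_eq_iff)
  next
    case 4 show False by (rule path[of 0 1 2 3]) (use 4 in \<open>auto simp: cycle4_def\<close>)
  qed
qed

lemma ex_cycle4_le: "ex cycle4 P3 \<le> 2"
proof -
  obtain F where F: "F \<subseteq> cycle4" "P3_free F" "card F = ex cycle4 P3"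
    using ex_attained simple_graph_cycle4 unfolding simple_graph_def by blast
  have "card F \<le> 2"
  proof (rule ccontr)
    assume "\<not> card F \<le> 2"
    hence "card (cycle4 - F) \<le> 1"
      using F(1) card_cycle4 by (simp add: card_Diff_subset finite_subset cycle4_def)
    moreover have "finite (cycle4 - F)" unfolding cycle4_def by simp
    ultimately obtain e where "cycle4 - F \<subseteq> {e}"
      by (cases "cycle4 - F = {}") (auto simp: le_Suc_eq card_1_singleton_iff)
    hence "cycle4 - {e} \<subseteq> F" by blast
    thus False using not_P3_free_cycle4_minus P3_free_subset F(2) by blast
  qed
  thus ?thesis using F(3) by simp
qed

lemma num_edges_le_of_ex_less:
  assumes "1 \<le> k" "simple_graph G" "ex G P3 < k"
  shows "num_edges G \<le> (k choose 2) + (if k = 3 then 1 else 0)"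
proof -
  have "card G \<le> edge_bound (ex G P3)" by (rule card_le_edge_bound_ex[OF assms(2)])
  also have "\<dots> \<le> edge_bound (k - 1)" using assms by (intro edge_bound_mono) simp
  also have "\<dots> = (k choose 2) + (if k = 3 then 1 else 0)"
    unfolding edge_bound_def using assms(1) by (cases k) auto
  finally show ?thesis unfolding num_edges_def .
qed

lemma extremal_graph_exists:
  assumes "1 \<le> k"
  obtains G :: "nat set set"
  where "simple_graph G" "ex G P3 < k" "num_edges G = (k choose 2) + (if k = 3 then 1 else 0)"
proof (cases "k = 3")
  case True
  have "ex cycle4 P3 < k" using ex_cycle4_le True by simp
  moreover have "num_edges cycle4 = (k choose 2) + 1"
    using card_cycle4 True by (simp add: num_edges_def choose_two)
  ultimately show ?thesis using that[of cycle4] simple_graph_cycle4 True by simp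
next
  case False
  obtain m where k: "k = Suc m" using assms by (cases k) auto
  have "ex (pendant_clique m) P3 < k" using ex_pendant_clique_le[of m] k by simp
  moreover have "num_edges (pendant_clique m) = k choose 2"
    using card_pendant_clique[of m] k by (simp add: num_edges_def numeral_2_eq_2)
  ultimately show ?thesis using that[of "pendant_clique m"] simple_graph_pendant_clique False by simp
qed

theorem theorem3p14:
  fixes k :: nat
  assumes "k \<ge> 1"
  shows "(\<forall>G :: 'a set set. simple_graph G \<and> ex G P3 < k \<longrightarrow>
            num_edges G \<le> (k choose 2) + (if k = 3 then 1 else 0))
         \<and> E_H P3 k = enat ((k choose 2) + (if k = 3 then 1 else 0))"
proof (intro conjI allI impI)
  show "num_edges G \<le> (k choose 2) + (if k = 3 then 1 else 0)"
    if "simple_graph G \<and> ex G P3 < k" for G :: "'a set set"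
    using num_edges_le_of_ex_less[OF assms] that by blast
  obtain W :: "nat set set" where W: "simple_graph W" "ex W P3 < k"
    "num_edges W = (k choose 2) + (if k = 3 then 1 else 0)"
    using extremal_graph_exists[OF assms] .
  show "E_H P3 k = enat ((k choose 2) + (if k = 3 then 1 else 0))"
    unfolding E_H_def
  proof (rule Sup_eqI)
    fix y assume "y \<in> {enat (num_edges G) | G :: nat set set. simple_graph G \<and> ex G P3 < k}"
    then obtain G :: "nat set set" where "y = enat (num_edges G)" "simple_graph G" "ex G P3 < k"
      by blast
    thus "y \<le> enat ((k choose 2) + (if k = 3 then 1 else 0))"
      using num_edges_le_of_ex_less[OF assms, of G] by simp
  next
    fix y assume upper: "\<And>z. z \<in> {enat (num_edges G) | G :: nat set set. simple_graph G \<and> ex G P3 < k} \<Longrightarrow> z \<le> y"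
    have "enat (num_edges W) \<in> {enat (num_edges G) | G :: nat set set. simple_graph G \<and> ex G P3 < k}"
      using W(1,2) by blast
    from upper[OF this] show "enat ((k choose 2) + (if k = 3 then 1 else 0)) \<le> y" using W(3) by simp
  qed
qed

end
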